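(* Let $(\Omega,P,J)$ be a NAP-space. Then $\ker(J)$ is a fine ideal of $\mathfrak F(\mathcal P_{fin}(\Omega),\mathbb R)$.
   Context: Let $\Omega$ be a nonempty set, $\mathcal P_{fin}(\Omega)$ the set of finite subsets of $\Omega$, and $\mathfrak F=\mathfrak F(\mathcal P_{fin}(\Omega),\mathbb R)$ the real algebra of all functions $\mathcal P_{fin}(\Omega)\to\mathbb R$ with pointwise operations. For $\omega\in\Omega$, $\chi_\lambda(\omega)=1$ if $\omega\in\lambda$ and $0$ otherwise. An ideal $I$ of $\mathfrak F$ is fine if it is maximal and, for every $\omega\in\Omega$, $\lambda\mapsto1-\chi_\lambda(\omega)$ belongs to $I$. A superreal field is an ordered field containing $\mathbb R$ as an ordered subfield. A NAP-space $(\Omega,P,J)$ consists of a superreal field $\mathcal R$, a function $P:\mathcal P(\Omega)\to\mathcal R$ and an algebra homomorphism $J:\mathfrak F\to\mathcal R$ such that: (NAP1) $P(A)\ge0$ for all $A\subseteq\Omega$; (NAP2) $P(A)=1$ iff $A=\Omega$; (NAP3) $P(A\cup B)=P(A)+P(B)$ whenever $A\cap B=\varnothing$; (NAP4) writing $P(A\mid B)=P(A\cap B)/P(B)$ for $B\neq\varnothing$, one has $P(A\mid\lambda)\in\mathbb R$ for every nonempty finite $\lambda$ and every $A$, and $P(A)=J(\varphi_A)$ for every $A\subseteq\Omega$, where $\varphi_A(\lambda)=P(A\mid\lambda)$ for nonempty finite $\lambda$ (and $\varphi_A(\varnothing)$ is an arbitrary fixed real value). *)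

theory Defs
  imports Complex_Main "HOL-Library.FSet"
begin

text \<open>The algebra F(P_fin(Omega), R): functions from finite subsets of Omega (type 'a fset)
  to the reals, with pointwise operations (written out explicitly below).\<close>

definition chi :: "'a fset \<Rightarrow> 'a \<Rightarrow> real" where
  "chi l w = (if w |\<in>| l then 1 else 0)"

definition fin_ideal :: "('a fset \<Rightarrow> real) set \<Rightarrow> bool" where
  "fin_ideal I \<longleftrightarrow>
     (\<lambda>_. 0) \<in> I \<and>
     (\<forall>f\<in>I. \<forall>g\<in>I. (\<lambda>l. f l + g l) \<in> I) \<and>
     (\<forall>f\<in>I. \<forall>h. (\<lambda>l. h l * f l) \<in> I)"

definition maximal_fin_ideal :: "('a fset \<Rightarrow> real) set \<Rightarrow> bool" where
  "maximal_fin_ideal I \<longleftrightarrow> fin_ideal I \<and> I \<noteq> UNIV \<and>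
     (\<forall>K. fin_ideal K \<and> I \<subseteq> K \<longrightarrow> K = I \<or> K = UNIV)"

definition fine_ideal :: "('a fset \<Rightarrow> real) set \<Rightarrow> bool" where
  "fine_ideal I \<longleftrightarrow> maximal_fin_ideal I \<and> (\<forall>w. (\<lambda>l. 1 - chi l w) \<in> I)"

definition superreal_emb :: "(real \<Rightarrow> 'r::linordered_field) \<Rightarrow> bool" where
  "superreal_emb e \<longleftrightarrow> e 1 = 1 \<and>
     (\<forall>x y. e (x + y) = e x + e y \<and> e (x * y) = e x * e y \<and> (e x \<le> e y \<longleftrightarrow> x \<le> y))"

definition alg_hom :: "(real \<Rightarrow> 'r::linordered_field) \<Rightarrow> (('a fset \<Rightarrow> real) \<Rightarrow> 'r) \<Rightarrow> bool" where
  "alg_hom e J \<longleftrightarrow>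
     J (\<lambda>_. 1) = 1 \<and>
     (\<forall>f g. J (\<lambda>l. f l + g l) = J f + J g) \<and>
     (\<forall>f g. J (\<lambda>l. f l * g l) = J f * J g) \<and>
     (\<forall>r f. J (\<lambda>l. r * f l) = e r * J f)"

definition cond_prob :: "('a set \<Rightarrow> 'r::linordered_field) \<Rightarrow> 'a set \<Rightarrow> 'a set \<Rightarrow> 'r" where
  "cond_prob P A B = P (A \<inter> B) / P B"

definition phi :: "(real \<Rightarrow> 'r::linordered_field) \<Rightarrow> ('a set \<Rightarrow> 'r) \<Rightarrow> real \<Rightarrow> 'a set \<Rightarrow> 'a fset \<Rightarrow> real" where
  "phi e P c A l = (if l = {||} then c else (THE r. e r = cond_prob P A (fset l)))"

definition NAP_space :: "(real \<Rightarrow> 'r::linordered_field) \<Rightarrow> ('a set \<Rightarrow> 'r) \<Rightarrow> (('a fset \<Rightarrow> real) \<Rightarrow> 'r) \<Rightarrow> real \<Rightarrow> bool" where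
  "NAP_space e P J c \<longleftrightarrow>
     superreal_emb e \<and> alg_hom e J \<and>
     (\<forall>A. P A \<ge> 0) \<and>
     (\<forall>A. P A = 1 \<longleftrightarrow> A = UNIV) \<and>
     (\<forall>A B. A \<inter> B = {} \<longrightarrow> P (A \<union> B) = P A + P B) \<and>
     (\<forall>l A. l \<noteq> {||} \<longrightarrow> cond_prob P A (fset l) \<in> range e) \<and>
     (\<forall>A. P A = J (phi e P c A))"

end

theory Submission
  imports Defs
begin

(* The kernel of a unital ring homomorphism J into a field is a
   maximal ideal: if an ideal K properly contains ker J, pick f in K with J f nonzero; the indicator g of the zero set of f satisfies f * g = 0, hence
   J g = 0 and g is in K, and (1/f) * f + g = 1 shows that K contains 1.
   Fineness rests on the pointwise identity  phi_{w} * (1 - chi_w) = phi_{}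
   between the conditional-probability functions of the NAP-space: applying J
   gives P {w} * J (1 - chi_w) = P {} = 0, while P {w} is nonzero because
   P (UNIV - {w}) is not 1.
   The file first collects elementary facts about the embedding e and the
   homomorphism J, then proves that the kernel is a maximal ideal, then the
   probabilistic facts about P and phi, and finally combines them. *)

lemma superreal_emb_zero:
  assumes "superreal_emb e"
  shows "e 0 = 0"
proof -
  have "e (0 + 0) = e 0 + e 0" using assms unfolding superreal_emb_def by blast
  then show ?thesis by simp
qed

text \<open>An ordered embedding is injective; this makes the real value of a
  conditional probability well defined.\<close>

lemma superreal_emb_inj:
  assumes "superreal_emb e" and "e x = e y"
  shows "x = y"
proof -
  have "\<And>a b. e a \<le> e b \<longleftrightarrow> a \<le> b" using assms(1) unfolding superreal_emb_def by blast
  from this[of x y] this[of y x] show ?thesis using assms(2) by simp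
qed

lemma alg_hom_one: "alg_hom e J \<Longrightarrow> J (\<lambda>_. 1) = 1"
  and alg_hom_add: "alg_hom e J \<Longrightarrow> J (\<lambda>l. f l + g l) = J f + J g"
  and alg_hom_mult: "alg_hom e J \<Longrightarrow> J (\<lambda>l. f l * g l) = J f * J g"
  unfolding alg_hom_def by auto

lemma alg_hom_zero:
  assumes "alg_hom e J"
  shows "J (\<lambda>_. 0) = 0"
  using alg_hom_add[OF assms, of "\<lambda>_. 0" "\<lambda>_. 0"] by simp

lemma fin_ideal_kernel:
  assumes "alg_hom e J"
  shows "fin_ideal {f. J f = 0}"
  unfolding fin_ideal_def
  using alg_hom_zero[OF assms] alg_hom_add[OF assms] alg_hom_mult[OF assms] by simp

lemma fin_ideal_full_if_zero_indicator:
  assumes K: "fin_ideal K" and f: "f \<in> K"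
    and g: "(\<lambda>l. if f l = 0 then 1 else 0) \<in> K"
  shows "K = UNIV"
proof -
  have K_add: "\<forall>f\<in>K. \<forall>g\<in>K. (\<lambda>l. f l + g l) \<in> K"
    and K_mult: "\<forall>f\<in>K. \<forall>h. (\<lambda>l. h l * f l) \<in> K"
    using K unfolding fin_ideal_def by simp_all
  define h where "h l = (if f l = 0 then 0 else 1 / f l)" for l
  have "(\<lambda>l. h l * f l + (if f l = 0 then 1 else 0)) \<in> K"
    using K_add[rule_format, OF K_mult[rule_format, OF f] g] by simp
  moreover have "(\<lambda>l. h l * f l + (if f l = 0 then 1 else 0)) = (\<lambda>_. 1)"
    by (auto simp: h_def)
  ultimately have one: "(\<lambda>_. 1) \<in> K" by simp
  have "k \<in> K" for k
    using K_mult[rule_format, OF one, of k] by simp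
  then show ?thesis by blast
qed

text \<open>Kernels of unital homomorphisms into a field are maximal ideals: an element
  outside the kernel has an annihilator, its zero indicator, inside the kernel.\<close>

lemma maximal_fin_ideal_kernel:
  assumes hom: "alg_hom e J"
  shows "maximal_fin_ideal {f. J f = 0}"
  unfolding maximal_fin_ideal_def
proof (intro conjI allI impI)
  show "fin_ideal {f. J f = 0}" using fin_ideal_kernel[OF hom] .
  have "(\<lambda>_. 1) \<notin> {f. J f = 0}" using alg_hom_one[OF hom] by simp
  then show "{f. J f = 0} \<noteq> UNIV" by blast
next
  fix K assume K: "fin_ideal K \<and> {f. J f = 0} \<subseteq> K"
  show "K = {f. J f = 0} \<or> K = UNIV"
  proof (cases "K \<subseteq> {f. J f = 0}")
    case True then show ?thesis using K by blast
  next
    case False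
    then obtain f where f: "f \<in> K" "J f \<noteq> 0" by auto
    define g where "g l = (if f l = 0 then 1 else (0::real))" for l
    have "(\<lambda>l. f l * g l) = (\<lambda>_. 0)" by (auto simp: g_def)
    then have "J f * J g = 0" using alg_hom_mult[OF hom, of f g] alg_hom_zero[OF hom] by simp
    then have "g \<in> K" using f K by auto
    then have "K = UNIV"
      using fin_ideal_full_if_zero_indicator[of K f] K f by (simp add: g_def[abs_def])
    then show ?thesis ..
  qed
qed

lemma NAP_spaceD:
  assumes "NAP_space e P J c"
  shows NAP_emb: "superreal_emb e"
    and NAP_hom: "alg_hom e J"
    and NAP_total: "P A = 1 \<longleftrightarrow> A = UNIV"
    and NAP_additive: "A \<inter> B = {} \<Longrightarrow> P (A \<union> B) = P A + P B"
    and NAP_J: "P A = J (phi e P c A)"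
  using assms unfolding NAP_space_def by auto

lemma NAP_empty:
  assumes "NAP_space e P J c"
  shows "P {} = 0"
proof -
  have "P ({} \<union> {}) = P {} + P {}" by (rule NAP_additive[OF assms]) simp
  then show ?thesis by simp
qed

text \<open>Singletons have nonzero probability: otherwise their complement would
  have probability 1, i.e.\ be the whole space.\<close>

lemma NAP_singleton_nonzero:
  assumes nap: "NAP_space e P J c"
  shows "P {w} \<noteq> 0"
proof
  assume "P {w} = 0"
  have "P ({w} \<union> (UNIV - {w})) = P {w} + P (UNIV - {w})"
    by (rule NAP_additive[OF nap]) blast
  moreover have "{w} \<union> (UNIV - {w}) = UNIV" by blast
  ultimately have "P UNIV = P {w} + P (UNIV - {w})" by simp
  then have "P (UNIV - {w}) = 1"
    using NAP_total[OF nap, of UNIV] \<open>P {w} = 0\<close> by simp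
  then show False using NAP_total[OF nap, of "UNIV - {w}"] by blast
qed

lemma phi_empty:
  assumes nap: "NAP_space e P J c" and "l \<noteq> {||}"
  shows "phi e P c {} l = 0"
proof -
  note emb = NAP_emb[OF nap]
  have "(THE r. e r = cond_prob P {} (fset l)) = 0"
  proof (rule the_equality)
    show "e 0 = cond_prob P {} (fset l)"
      using superreal_emb_zero[OF emb] NAP_empty[OF nap] by (simp add: cond_prob_def)
    show "r = 0" if "e r = cond_prob P {} (fset l)" for r
      using that superreal_emb_inj[OF emb] superreal_emb_zero[OF emb] NAP_empty[OF nap]
      by (simp add: cond_prob_def)
  qed
  then show ?thesis using assms(2) by (simp add: phi_def)
qed

text \<open>The key pointwise identity: conditioning {w} on a finite set avoiding w is
  the same as conditioning the empty event.\<close>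

lemma phi_singleton_times_co_chi:
  assumes nap: "NAP_space e P J c"
  shows "(\<lambda>l. phi e P c {w} l * (1 - chi l w)) = phi e P c {}"
proof
  fix l
  show "phi e P c {w} l * (1 - chi l w) = phi e P c {} l"
  proof (cases "l = {||}")
    case True then show ?thesis by (simp add: phi_def chi_def)
  next
    case False
    show ?thesis
    proof (cases "w |\<in>| l")
      case True then show ?thesis using phi_empty[OF nap False] by (simp add: chi_def)
    next
      case False
      then have "{w} \<inter> fset l = {} \<inter> fset l" by auto
      then show ?thesis using False by (simp add: phi_def cond_prob_def chi_def)
    qed
  qed
qed

lemma NAP_co_chi_in_kernel:
  assumes nap: "NAP_space e P J c"
  shows "J (\<lambda>l. 1 - chi l w) = 0"
proof -
  have "P {w} * J (\<lambda>l. 1 - chi l w) = J (\<lambda>l. phi e P c {w} l * (1 - chi l w))"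
    using alg_hom_mult[OF NAP_hom[OF nap]] NAP_J[OF nap] by simp
  also have "\<dots> = P {}"
    using phi_singleton_times_co_chi[OF nap] NAP_J[OF nap] by simp
  finally have "P {w} * J (\<lambda>l. 1 - chi l w) = P {}" .
  then show ?thesis using NAP_empty[OF nap] NAP_singleton_nonzero[OF nap] by simp
qed

theorem mainTheorem7:
  fixes e :: "real \<Rightarrow> 'r::linordered_field"
    and P :: "'a set \<Rightarrow> 'r"
    and J :: "('a fset \<Rightarrow> real) \<Rightarrow> 'r"
    and c :: real
  assumes "NAP_space e P J c"
  shows "fine_ideal {f. J f = 0}"
  unfolding fine_ideal_def
  using maximal_fin_ideal_kernel[OF NAP_hom[OF assms]] NAP_co_chi_in_kernel[OF assms] by simp

end
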